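(* Let $\mathcal{C}$ be the split Cayley algebra over a field $\mathbb{F}$ with norm $\mathrm{n}$. Then every $2$-local automorphism of $\mathcal{C}$ is an automorphism; that is, the set of $2$-local automorphisms of $\mathcal{C}$ equals $\mathrm{Aut}(\mathcal{C})$.
   Context: A Cayley (octonion) algebra over $\mathbb{F}$ is a unital nonassociative algebra $\mathcal{C}$ of dimension $8$ over $\mathbb{F}$ endowed with a quadratic form $\mathrm{n}:\mathcal{C}\to\mathbb{F}$ (the norm) such that $\mathrm{n}(xy)=\mathrm{n}(x)\mathrm{n}(y)$ for all $x,y$ and whose polar form $\mathrm{n}(x,y)=\mathrm{n}(x+y)-\mathrm{n}(x)-\mathrm{n}(y)$ is nondegenerate. The split Cayley algebra is the (unique up to isomorphism) Cayley algebra whose norm is isotropic, i.e. $\mathrm{n}(x)=0$ for some $x\neq 0$. A map $\Delta:\mathcal{C}\to\mathcal{C}$ (not assumed linear) is a $2$-local automorphism if for every pair $x,y\in\mathcal{C}$ there is an algebra automorphism $\varphi_{x,y}$ of $\mathcal{C}$ with $\Delta(x)=\varphi_{x,y}(x)$ and $\Delta(y)=\varphi_{x,y}(y)$. *)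

theory Defs
  imports Complex_Main
begin

definition bilinear_map ::
  "('a::field \<Rightarrow> 'v::ab_group_add \<Rightarrow> 'v) \<Rightarrow> ('v \<Rightarrow> 'v \<Rightarrow> 'v) \<Rightarrow> bool" where
  "bilinear_map scl mul \<longleftrightarrow>
     (\<forall>x. Vector_Spaces.linear scl scl (\<lambda>y. mul x y)) \<and> (\<forall>y. Vector_Spaces.linear scl scl (\<lambda>x. mul x y))"

definition polar :: "('v::ab_group_add \<Rightarrow> 'a::field) \<Rightarrow> 'v \<Rightarrow> 'v \<Rightarrow> 'a" where
  "polar nrm x y = nrm (x + y) - nrm x - nrm y"

definition quadratic_form ::
  "('a::field \<Rightarrow> 'v::ab_group_add \<Rightarrow> 'v) \<Rightarrow> ('v \<Rightarrow> 'a) \<Rightarrow> bool" where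
  "quadratic_form scl nrm \<longleftrightarrow>
     (\<forall>c x. nrm (scl c x) = c ^ 2 * nrm x) \<and>
     (\<forall>x. Vector_Spaces.linear scl (*) (\<lambda>y. polar nrm x y)) \<and>
     (\<forall>y. Vector_Spaces.linear scl (*) (\<lambda>x. polar nrm x y))"

definition cayley_algebra ::
  "('a::field \<Rightarrow> 'v::ab_group_add \<Rightarrow> 'v) \<Rightarrow> ('v \<Rightarrow> 'v \<Rightarrow> 'v) \<Rightarrow> 'v \<Rightarrow> ('v \<Rightarrow> 'a) \<Rightarrow> bool" where
  "cayley_algebra scl mul e nrm \<longleftrightarrow>
     vector_space scl \<and>
     vector_space.dim scl (UNIV :: 'v set) = 8 \<and>
     bilinear_map scl mul \<and>
     (\<forall>x. mul e x = x \<and> mul x e = x) \<and>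
     quadratic_form scl nrm \<and>
     (\<forall>x y. nrm (mul x y) = nrm x * nrm y) \<and>
     (\<forall>x. (\<forall>y. polar nrm x y = 0) \<longrightarrow> x = 0)"

definition split_cayley_algebra ::
  "('a::field \<Rightarrow> 'v::ab_group_add \<Rightarrow> 'v) \<Rightarrow> ('v \<Rightarrow> 'v \<Rightarrow> 'v) \<Rightarrow> 'v \<Rightarrow> ('v \<Rightarrow> 'a) \<Rightarrow> bool" where
  "split_cayley_algebra scl mul e nrm \<longleftrightarrow>
     cayley_algebra scl mul e nrm \<and> (\<exists>x. x \<noteq> 0 \<and> nrm x = 0)"

definition algebra_aut ::
  "('a::field \<Rightarrow> 'v::ab_group_add \<Rightarrow> 'v) \<Rightarrow> ('v \<Rightarrow> 'v \<Rightarrow> 'v) \<Rightarrow> 'v \<Rightarrow> ('v \<Rightarrow> 'v) set" where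
  "algebra_aut scl mul e =
     {\<phi>. Vector_Spaces.linear scl scl \<phi> \<and> bij \<phi> \<and> (\<forall>x y. \<phi> (mul x y) = mul (\<phi> x) (\<phi> y)) \<and> \<phi> e = e}"

definition two_local_aut ::
  "('a::field \<Rightarrow> 'v::ab_group_add \<Rightarrow> 'v) \<Rightarrow> ('v \<Rightarrow> 'v \<Rightarrow> 'v) \<Rightarrow> 'v \<Rightarrow> ('v \<Rightarrow> 'v) \<Rightarrow> bool" where
  "two_local_aut scl mul e \<Delta> \<longleftrightarrow>
     (\<forall>x y. \<exists>\<phi>\<in>algebra_aut scl mul e. \<Delta> x = \<phi> x \<and> \<Delta> y = \<phi> y)"

end

theory Submission
  imports Defs
begin

(* A 2-local automorphism D agrees on any two elements with some automorphism, and
   automorphisms preserve the norm. Hence D preserves the nondegenerate polar form of a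
   finite-dimensional space, which forces D to be linear and bijective. An isotropic vector
   yields an idempotent r with n(r) = 0 and t(r) = 1, and the algebra is spanned by r, e - r
   and the Peirce spaces r C (e - r), (e - r) C r. The product of any two of these spanning
   elements is pinned down by a relation x y = a x + b y + c e between two suitable elements;
   the automorphism agreeing with D on that pair shows that D respects the relation. So D is
   multiplicative on a spanning set, hence everywhere by bilinearity. *)

locale quadratic_space = vs: vector_space scl
  for scl :: "'a::field \<Rightarrow> 'v::ab_group_add \<Rightarrow> 'v" (infixr "*s" 75) +
  fixes nrm :: "'v \<Rightarrow> 'a"
  assumes quadratic_form: "quadratic_form scl nrm"
    and polar_nondegenerate: "(\<And>y. polar nrm x y = 0) \<Longrightarrow> x = 0"
begin

lemma polar_hom_left: "module_hom scl (*) (\<lambda>x. polar nrm x y)"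
  and polar_hom_right: "module_hom scl (*) (\<lambda>y. polar nrm x y)"
  using quadratic_form by (simp_all add: quadratic_form_def linear_iff_module_hom)

lemmas polar_add_left = module_hom.add[OF polar_hom_left]
  and polar_add_right = module_hom.add[OF polar_hom_right]
  and polar_scale_left = module_hom.scale[OF polar_hom_left]
  and polar_scale_right = module_hom.scale[OF polar_hom_right]
  and polar_diff_left = module_hom.diff[OF polar_hom_left]
  and polar_diff_right = module_hom.diff[OF polar_hom_right]
  and polar_minus_left = module_hom.neg[OF polar_hom_left]
  and polar_minus_right = module_hom.neg[OF polar_hom_right]
  and polar_zero_left[simp] = module_hom.zero[OF polar_hom_left]
  and polar_zero_right[simp] = module_hom.zero[OF polar_hom_right]
  and polar_sum_left = module_hom.sum[OF polar_hom_left]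

lemmas polar_simps = polar_add_left polar_add_right polar_scale_left polar_scale_right
  polar_diff_left polar_diff_right polar_minus_left polar_minus_right

lemma polar_commute: "polar nrm x y = polar nrm y x"
  by (simp add: polar_def add.commute)

lemma nrm_scale: "nrm (c *s x) = c\<^sup>2 * nrm x"
  using quadratic_form by (simp add: quadratic_form_def)

lemma nrm_add: "nrm (x + y) = nrm x + nrm y + polar nrm x y"
  by (simp add: polar_def)

lemma nrm_minus: "nrm (- x) = nrm x"
  using nrm_scale[of "-1" x] by simp

lemma polar_self: "polar nrm x x = 2 * nrm x"
  using nrm_scale[of 2 x] by (simp add: polar_def vs.scale_left_distrib[of 1 1, simplified])

lemma polar_eqI: "(\<And>z. polar nrm x z = polar nrm y z) \<Longrightarrow> x = y"
  using polar_nondegenerate[of "x - y"] by (simp add: polar_diff_left)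

lemma eq_zero_if_orthogonal_to_spanning_set:
  assumes "vs.span S = UNIV" and "\<And>s. s \<in> S \<Longrightarrow> polar nrm w s = 0"
  shows "w = 0"
proof (rule polar_nondegenerate)
  fix y
  have "vs.subspace {v. polar nrm w v = 0}"
    by (simp add: vs.subspace_def polar_add_right polar_scale_right)
  then have "vs.span S \<subseteq> {v. polar nrm w v = 0}"
    using assms(2) by (intro vs.span_minimal) auto
  with assms(1) show "polar nrm w y = 0" by auto
qed

context
  fixes f :: "'v \<Rightarrow> 'v"
  assumes polar_preserving: "\<And>x y. polar nrm (f x) (f y) = polar nrm x y"
begin

lemma polar_preserving_inj: "inj f"
proof (rule injI)
  fix x y
  assume "f x = f y"
  then show "x = y"
    using polar_preserving[of x] polar_preserving[of y] by (intro polar_eqI) metis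
qed

lemma polar_preserving_independent_image:
  assumes B: "vs.independent B"
  shows "vs.independent (f ` B)"
  unfolding vs.independent_explicit_finite_subsets
proof (intro allI impI ballI)
  fix S u v
  assume S: "S \<subseteq> f ` B" "finite S" and sum_zero: "(\<Sum>v\<in>S. u v *s v) = 0" and "v \<in> S"
  define S' where "S' = {b \<in> B. f b \<in> S}"
  have S_eq: "S = f ` S'" using S(1) by (auto simp: S'_def)
  have inj_S': "inj_on f S'" using polar_preserving_inj by (rule inj_on_subset) simp
  have "finite S'"
    using finite_vimageI[OF S(2) polar_preserving_inj] by (rule finite_subset[rotated]) (auto simp: S'_def)
  have "(\<Sum>b\<in>S'. u (f b) *s b) = 0"
  proof (rule polar_nondegenerate)
    fix z
    have "polar nrm (\<Sum>b\<in>S'. u (f b) *s b) z = (\<Sum>b\<in>S'. u (f b) * polar nrm (f b) (f z))"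
      by (simp add: polar_sum_left polar_scale_left polar_preserving)
    also have "\<dots> = polar nrm (\<Sum>v\<in>S. u v *s v) (f z)"
      unfolding S_eq polar_sum_left sum.reindex[OF inj_S'] by (simp add: polar_scale_left)
    finally show "polar nrm (\<Sum>b\<in>S'. u (f b) *s b) z = 0" by (simp add: sum_zero)
  qed
  moreover have "S' \<subseteq> B" by (auto simp: S'_def)
  ultimately have "u (f b) = 0" if "b \<in> S'" for b
    using B[unfolded vs.independent_explicit_finite_subsets, rule_format, of S' "\<lambda>b. u (f b)"]
      \<open>finite S'\<close> that by simp
  then show "u v = 0" using \<open>v \<in> S\<close> S_eq by blast
qed

end

end

locale finite_dimensional_quadratic_space =
  quadratic_space scl nrm + vs: finite_dimensional_vector_space scl Basis
  for scl :: "'a::field \<Rightarrow> 'v::ab_group_add \<Rightarrow> 'v" (infixr "*s" 75)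
    and nrm :: "'v \<Rightarrow> 'a" and Basis :: "'v set"
begin

context
  fixes f :: "'v \<Rightarrow> 'v"
  assumes polar_preserving: "\<And>x y. polar nrm (f x) (f y) = polar nrm x y"
begin

lemma polar_preserving_span_image: "vs.span (f ` Basis) = UNIV"
proof -
  have "card (f ` Basis) = vs.dim UNIV"
    using polar_preserving_inj[OF polar_preserving] by (simp add: card_image inj_on_subset)
  with vs.card_eq_dim[of "f ` Basis" UNIV]
  show ?thesis
    using polar_preserving_independent_image[OF polar_preserving vs.independent_Basis]
    by (auto simp: vs.finite_Basis)
qed

lemma polar_preserving_linear: "Vector_Spaces.linear scl scl f"
proof -
  have "f (x + y) - (f x + f y) = 0" for x y
    by (rule eq_zero_if_orthogonal_to_spanning_set[OF polar_preserving_span_image])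
      (auto simp: polar_diff_left polar_add_left polar_preserving)
  moreover have "f (c *s x) - c *s f x = 0" for c x
    by (rule eq_zero_if_orthogonal_to_spanning_set[OF polar_preserving_span_image])
      (auto simp: polar_diff_left polar_scale_left polar_preserving)
  ultimately show ?thesis
    unfolding Vector_Spaces.linear_iff by (simp add: vs.vector_space_axioms)
qed

lemma polar_preserving_bij: "bij f"
  using polar_preserving_linear polar_preserving_inj[OF polar_preserving]
  by (simp add: bij_def vs.linear_inj_imp_surj)

end

end

locale composition_algebra = quadratic_space scl nrm
  for scl :: "'a::field \<Rightarrow> 'v::ab_group_add \<Rightarrow> 'v" (infixr "*s" 75)
    and nrm :: "'v \<Rightarrow> 'a" +
  fixes mul :: "'v \<Rightarrow> 'v \<Rightarrow> 'v" (infixl "\<star>" 70) and e :: 'v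
  assumes mul_bilinear: "bilinear_map scl mul"
    and mul_unit_left[simp]: "e \<star> x = x"
    and mul_unit_right[simp]: "x \<star> e = x"
    and nrm_mul: "nrm (x \<star> y) = nrm x * nrm y"
    and unit_nonzero: "e \<noteq> 0"
begin

abbreviation tr :: "'v \<Rightarrow> 'a" where "tr x \<equiv> polar nrm x e"

lemma mul_hom_left: "module_hom scl scl (\<lambda>x. x \<star> y)"
  and mul_hom_right: "module_hom scl scl (\<lambda>y. x \<star> y)"
  using mul_bilinear by (simp_all add: bilinear_map_def linear_iff_module_hom)

lemmas mul_add_left = module_hom.add[OF mul_hom_left]
  and mul_add_right = module_hom.add[OF mul_hom_right]
  and mul_scale_left = module_hom.scale[OF mul_hom_left]
  and mul_scale_right = module_hom.scale[OF mul_hom_right]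
  and mul_diff_left = module_hom.diff[OF mul_hom_left]
  and mul_diff_right = module_hom.diff[OF mul_hom_right]
  and mul_minus_left = module_hom.neg[OF mul_hom_left]
  and mul_minus_right = module_hom.neg[OF mul_hom_right]
  and mul_zero_left[simp] = module_hom.zero[OF mul_hom_left]
  and mul_zero_right[simp] = module_hom.zero[OF mul_hom_right]

lemmas mul_simps = mul_add_left mul_add_right mul_scale_left mul_scale_right
  mul_diff_left mul_diff_right mul_minus_left mul_minus_right

lemma nrm_unit[simp]: "nrm e = 1"
proof -
  have "nrm e \<noteq> 0"
  proof
    assume "nrm e = 0"
    then have "polar nrm e y = 0" for y
      using nrm_mul[of _ e] by (simp add: polar_def)
    then show False using unit_nonzero polar_nondegenerate by blast
  qed
  moreover have "nrm e = nrm e * nrm e" using nrm_mul[of e e] by simp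
  ultimately show ?thesis by simp
qed

lemma tr_unit[simp]: "tr e = 2"
  by (simp add: polar_self)

lemma polar_mul_left: "polar nrm (x \<star> y) (x \<star> z) = nrm x * polar nrm y z"
  using nrm_mul[of x "y + z"] by (simp add: mul_add_right nrm_add nrm_mul algebra_simps)

lemma polar_mul_right: "polar nrm (y \<star> x) (z \<star> x) = nrm x * polar nrm y z"
  using nrm_mul[of "y + z" x] by (simp add: mul_add_left nrm_add nrm_mul algebra_simps)

definition conjugate :: "'v \<Rightarrow> 'v" where "conjugate x = tr x *s e - x"

lemma conjugate_mul: "conjugate x \<star> z = tr x *s z - x \<star> z"
  by (simp add: conjugate_def mul_simps)

lemma mul_conjugate: "z \<star> conjugate x = tr x *s z - z \<star> x"
  by (simp add: conjugate_def mul_simps)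

lemma tr_conjugate: "tr (conjugate x) = tr x"
  by (simp add: conjugate_def polar_simps)

lemma conjugate_conjugate[simp]: "conjugate (conjugate x) = x"
  unfolding conjugate_def[of "conjugate x"] tr_conjugate by (simp add: conjugate_def)

lemma polar_mul_conjugate_left: "polar nrm (x \<star> y) z = polar nrm y (conjugate x \<star> z)"
proof -
  have "polar nrm ((x + e) \<star> y) ((x + e) \<star> z) = nrm (x + e) * polar nrm y z"
    by (rule polar_mul_left)
  then show ?thesis
    by (simp add: mul_add_left polar_add_left polar_add_right polar_mul_left nrm_add
        conjugate_mul polar_diff_right polar_scale_right polar_commute[of e] algebra_simps)
qed

lemma polar_mul_conjugate_right: "polar nrm (y \<star> x) z = polar nrm y (z \<star> conjugate x)"
proof -
  have "polar nrm (y \<star> (x + e)) (z \<star> (x + e)) = nrm (x + e) * polar nrm y z"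
    by (rule polar_mul_right)
  then show ?thesis
    by (simp add: mul_add_right polar_add_left polar_add_right polar_mul_right nrm_add
        mul_conjugate polar_diff_right polar_scale_right polar_commute[of e] algebra_simps)
qed

lemma mul_self_eq: "x \<star> x = tr x *s x - nrm x *s e"
proof (rule polar_eqI)
  fix z
  have "polar nrm (x \<star> x) z = polar nrm x (tr x *s z - x \<star> z)"
    by (simp add: polar_mul_conjugate_left conjugate_mul)
  also have "\<dots> = tr x * polar nrm x z - nrm x * polar nrm e z"
    using polar_mul_left[of x e z] by (simp add: polar_simps)
  finally show "polar nrm (x \<star> x) z = polar nrm (tr x *s x - nrm x *s e) z"
    by (simp add: polar_simps)
qed

lemma mul_self_eq_linearized: "x \<star> y + y \<star> x = tr x *s y + tr y *s x - polar nrm x y *s e"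
proof -
  have "x \<star> x + y \<star> y + (x \<star> y + y \<star> x) = (x + y) \<star> (x + y)"
    by (simp add: mul_simps algebra_simps)
  also have "\<dots> = tr (x + y) *s (x + y) - nrm (x + y) *s e"
    by (rule mul_self_eq)
  also have "\<dots> = x \<star> x + y \<star> y + (tr x *s y + tr y *s x - polar nrm x y *s e)"
    by (simp add: mul_self_eq polar_add_left nrm_add vs.scale_left_distrib vs.scale_right_distrib
        algebra_simps)
  finally show ?thesis by simp
qed

lemma conjugate_mul_cancel: "conjugate x \<star> (x \<star> y) = nrm x *s y"
proof (rule polar_eqI)
  fix z
  have "polar nrm (conjugate x \<star> (x \<star> y)) z = polar nrm (x \<star> y) (x \<star> z)"
    using polar_mul_conjugate_left[of "conjugate x" "x \<star> y" z] by simp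
  then show "polar nrm (conjugate x \<star> (x \<star> y)) z = polar nrm (nrm x *s y) z"
    by (simp add: polar_mul_left polar_scale_left)
qed

lemma mul_conjugate_cancel: "(y \<star> x) \<star> conjugate x = nrm x *s y"
proof (rule polar_eqI)
  fix z
  have "polar nrm ((y \<star> x) \<star> conjugate x) z = polar nrm (y \<star> x) (z \<star> x)"
    using polar_mul_conjugate_right[of "y \<star> x" "conjugate x" z] by simp
  then show "polar nrm ((y \<star> x) \<star> conjugate x) z = polar nrm (nrm x *s y) z"
    by (simp add: polar_mul_right polar_scale_left)
qed

lemma left_alternative: "x \<star> (x \<star> y) = (x \<star> x) \<star> y"
  using conjugate_mul_cancel[of x y] by (simp add: conjugate_mul mul_self_eq mul_simps algebra_simps)

lemma right_alternative: "(y \<star> x) \<star> x = y \<star> (x \<star> x)"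
  using mul_conjugate_cancel[of y x] by (simp add: mul_conjugate mul_self_eq mul_simps algebra_simps)

lemma left_alternative_linearized: "x \<star> (y \<star> z) + y \<star> (x \<star> z) = (x \<star> y) \<star> z + (y \<star> x) \<star> z"
  using left_alternative[of "x + y" z] left_alternative[of x z] left_alternative[of y z]
  by (simp add: mul_simps algebra_simps)

lemma right_alternative_linearized: "(z \<star> x) \<star> y + (z \<star> y) \<star> x = z \<star> (x \<star> y) + z \<star> (y \<star> x)"
  using right_alternative[of z "x + y"] right_alternative[of z x] right_alternative[of z y]
  by (simp add: mul_simps algebra_simps)

lemma flexible: "x \<star> (y \<star> x) = (x \<star> y) \<star> x"
  using left_alternative_linearized[of x y x] right_alternative[of y x] by simp

lemma mul_hom_if_mul_hom_on_spanning_set: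
  assumes f: "module_hom scl scl f" and S: "vs.span S = UNIV"
    and mul_S: "\<And>x y. x \<in> S \<Longrightarrow> y \<in> S \<Longrightarrow> f (x \<star> y) = f x \<star> f y"
  shows "f (x \<star> y) = f x \<star> f y"
proof -
  interpret f: module_hom scl scl f by (rule f)
  have subspace_right: "vs.subspace {y. f (x \<star> y) = f x \<star> f y}" for x
    by (simp add: vs.subspace_def mul_add_right mul_scale_right f.add f.scale)
  have subspace_left: "vs.subspace {x. f (x \<star> y) = f x \<star> f y}" for y
    by (simp add: vs.subspace_def mul_add_left mul_scale_left f.add f.scale)
  have "f (x \<star> y) = f x \<star> f y" if "x \<in> S" for x y
    using vs.span_minimal[OF _ subspace_right[of x]] mul_S[OF that] S by blast
  then show ?thesis
    using vs.span_minimal[OF _ subspace_left[of y]] S by blast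
qed

lemma algebra_autD:
  assumes "\<phi> \<in> algebra_aut scl (\<star>) e"
  shows "module_hom scl scl \<phi>" and "\<phi> (x \<star> y) = \<phi> x \<star> \<phi> y" and "\<phi> e = e" and "inj \<phi>"
  using assms by (auto simp: algebra_aut_def linear_iff_module_hom bij_def)

lemma algebra_aut_nrm:
  assumes aut: "\<phi> \<in> algebra_aut scl (\<star>) e"
  shows "nrm (\<phi> x) = nrm x"
proof -
  interpret \<phi>: module_hom scl scl \<phi> by (rule algebra_autD(1)[OF aut])
  have "tr x *s \<phi> x - nrm x *s e = \<phi> (x \<star> x)"
    by (simp add: mul_self_eq \<phi>.diff \<phi>.scale algebra_autD(3)[OF aut])
  also have "\<dots> = tr (\<phi> x) *s \<phi> x - nrm (\<phi> x) *s e"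
    unfolding algebra_autD(2)[OF aut] by (rule mul_self_eq)
  finally have eq: "(tr x - tr (\<phi> x)) *s \<phi> x = (nrm x - nrm (\<phi> x)) *s e"
    by (simp add: vs.scale_left_diff_distrib algebra_simps)
  show ?thesis
  proof (cases "tr x = tr (\<phi> x)")
    case True
    with eq unit_nonzero show ?thesis by simp
  next
    case False
    \<comment> \<open>Then \<phi> x lies in the scalars F e, on which \<phi> is the identity.\<close>
    define c where "c = (nrm x - nrm (\<phi> x)) / (tr x - tr (\<phi> x))"
    have \<phi>x: "\<phi> x = c *s e"
      using arg_cong[OF eq, of "scl (1 / (tr x - tr (\<phi> x)))"] False by (simp add: c_def)
    also have "\<dots> = \<phi> (c *s e)"
      by (simp add: \<phi>.scale algebra_autD(3)[OF aut])
    finally have "x = c *s e"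
      by (rule injD[OF algebra_autD(4)[OF aut]])
    with \<phi>x have "\<phi> x = x" by simp
    with False show ?thesis by simp
  qed
qed

lemma algebra_aut_polar:
  assumes aut: "\<phi> \<in> algebra_aut scl (\<star>) e"
  shows "polar nrm (\<phi> x) (\<phi> y) = polar nrm x y"
proof -
  have "\<phi> (x + y) = \<phi> x + \<phi> y" by (rule module_hom.add[OF algebra_autD(1)[OF aut]])
  then show ?thesis
    using algebra_aut_nrm[OF aut, of "x + y"] algebra_aut_nrm[OF aut, of x] algebra_aut_nrm[OF aut, of y]
    by (simp add: polar_def)
qed

definition isotropic_idempotent :: "'v \<Rightarrow> bool" where
  "isotropic_idempotent r \<longleftrightarrow> r \<star> r = r \<and> nrm r = 0 \<and> tr r = 1"

lemma exists_isotropic_idempotent: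
  assumes "x \<noteq> 0" and "nrm x = 0"
  shows "\<exists>r. isotropic_idempotent r"
proof -
  have "conjugate x \<noteq> 0"
  proof
    assume "conjugate x = 0"
    then have "x = conjugate 0" using conjugate_conjugate[of x] by simp
    with assms(1) show False by (simp add: conjugate_def)
  qed
  then obtain y where y: "polar nrm (conjugate x) y \<noteq> 0"
    using polar_nondegenerate by blast
  define a where "a = x \<star> y"
  have tr_a: "tr a = polar nrm (conjugate x) y"
    using polar_mul_conjugate_left[of x y e] by (simp add: a_def polar_commute)
  have "nrm a = 0"
    using assms(2) by (simp add: a_def nrm_mul)
  define r where "r = (1 / tr a) *s a"
  have "tr r = 1" and "nrm r = 0"
    using y tr_a \<open>nrm a = 0\<close> by (simp_all add: r_def polar_scale_left nrm_scale)
  moreover from this have "r \<star> r = r"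
    by (simp add: mul_self_eq)
  ultimately show ?thesis
    unfolding isotropic_idempotent_def by blast
qed

lemma isotropic_idempotentD:
  assumes "isotropic_idempotent r"
  shows "r \<star> r = r" and "nrm r = 0" and "tr r = 1"
  using assms by (simp_all add: isotropic_idempotent_def)

lemma isotropic_idempotent_complement:
  assumes r: "isotropic_idempotent r"
  shows "isotropic_idempotent (e - r)"
proof -
  have "nrm (e - r) = 0"
    using nrm_add[of e "- r"] isotropic_idempotentD[OF r]
    by (simp add: nrm_minus polar_minus_right polar_commute[of e r])
  then show ?thesis
    using isotropic_idempotentD[OF r]
    by (simp add: isotropic_idempotent_def mul_simps polar_diff_left)
qed

lemma isotropic_idempotent_nonzero: "isotropic_idempotent r \<Longrightarrow> r \<noteq> 0"
  by (auto simp: isotropic_idempotent_def)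

lemma idempotent_mul_complement:
  assumes "r \<star> r = r"
  shows "r \<star> (e - r) = 0" and "(e - r) \<star> r = 0"
  using assms by (simp_all add: mul_simps)

text \<open>The Peirce space C12 = r C (e - r) of an idempotent r; the space C21 is
  peirce12 (e - r).\<close>
definition peirce12 :: "'v \<Rightarrow> 'v \<Rightarrow> bool" where
  "peirce12 r u \<longleftrightarrow> r \<star> u = u \<and> u \<star> r = 0"

definition peirce_generators :: "'v \<Rightarrow> 'v set" where
  "peirce_generators r = {r, e - r} \<union> Collect (peirce12 r) \<union> Collect (peirce12 (e - r))"

lemma peirce12_complement_iff: "peirce12 (e - r) v \<longleftrightarrow> r \<star> v = 0 \<and> v \<star> r = v"
  by (auto simp: peirce12_def mul_simps)

lemma peirce_generators_complement: "peirce_generators (e - r) = peirce_generators r"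
  by (auto simp: peirce_generators_def)

lemma peirce11_eq:
  assumes r: "isotropic_idempotent r" and "r \<star> z = z" and "z \<star> r = z"
  shows "z = tr z *s r"
proof -
  note r_props = isotropic_idempotentD[OF r]
  have "r \<star> z + z \<star> r = tr r *s z + tr z *s r - polar nrm r z *s e"
    by (rule mul_self_eq_linearized)
  then have z: "z = tr z *s r - polar nrm r z *s e"
    using assms r_props by (simp add: algebra_simps)
  have "0 = (e - r) \<star> z"
    using assms(2) by (simp add: mul_diff_left)
  also have "\<dots> = - (polar nrm r z *s (e - r))"
    by (subst z) (simp add: mul_simps r_props)
  finally have "polar nrm r z = 0"
    using isotropic_idempotent_nonzero[OF isotropic_idempotent_complement[OF r]] by simp
  with z show ?thesis by simp
qed

lemma peirce12_mul_self:
  assumes r: "isotropic_idempotent r" and "peirce12 r z"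
  shows "z \<star> z = 0"
proof -
  note r_props = isotropic_idempotentD[OF r]
  have rz: "r \<star> z = z" and zr: "z \<star> r = 0"
    using assms(2) by (simp_all add: peirce12_def)
  have "r \<star> z + z \<star> r = tr r *s z + tr z *s r - polar nrm r z *s e"
    by (rule mul_self_eq_linearized)
  then have z: "tr z *s r = polar nrm r z *s e"
    using rz zr r_props by (simp add: algebra_simps)
  have "polar nrm r z *s (e - r) = polar nrm r z *s e - (polar nrm r z *s e) \<star> r"
    by (simp add: vs.scale_right_diff_distrib mul_scale_left)
  also have "\<dots> = 0"
    by (simp flip: z add: mul_scale_left r_props)
  finally have "polar nrm r z = 0"
    using isotropic_idempotent_nonzero[OF isotropic_idempotent_complement[OF r]] by simp
  then have "tr z = 0"
    using z isotropic_idempotent_nonzero[OF r] by simp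
  moreover have "nrm z = 0"
    using nrm_mul[of r z] rz r_props by simp
  ultimately show ?thesis by (simp add: mul_self_eq)
qed

lemma peirce_decomposition:
  assumes r: "isotropic_idempotent r"
  shows "\<exists>a b u v. z = a *s r + b *s (e - r) + u + v \<and> peirce12 r u \<and> peirce12 (e - r) v"
proof -
  note rr = isotropic_idempotentD(1)[OF r]
  have r_rz: "r \<star> (r \<star> z) = r \<star> z" using left_alternative[of r z] rr by simp
  have zr_r: "(z \<star> r) \<star> r = z \<star> r" using right_alternative[of z r] rr by simp
  have flex: "r \<star> (z \<star> r) = (r \<star> z) \<star> r" by (rule flexible)
  define z11 where "z11 = (r \<star> z) \<star> r"
  define z12 where "z12 = r \<star> z - z11"
  define z21 where "z21 = z \<star> r - z11"
  define z22 where "z22 = z - r \<star> z - z \<star> r + z11"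
  have r_z11: "r \<star> z11 = z11" unfolding z11_def using flexible[of r "r \<star> z"] r_rz by simp
  have z11_r: "z11 \<star> r = z11" unfolding z11_def using right_alternative[of "r \<star> z" r] rr by simp
  have r_z22: "r \<star> z22 = 0"
    unfolding z22_def using r_rz flex r_z11 by (simp add: mul_simps z11_def)
  have z22_r: "z22 \<star> r = 0"
    unfolding z22_def using zr_r z11_r by (simp add: mul_simps z11_def)
  have "z11 = tr z11 *s r"
    using peirce11_eq[OF r] r_z11 z11_r by blast
  moreover have "z22 = tr z22 *s (e - r)"
    using peirce11_eq[OF isotropic_idempotent_complement[OF r]] r_z22 z22_r
    by (simp add: mul_simps)
  moreover have "peirce12 r z12"
    unfolding peirce12_def z12_def using r_rz r_z11 z11_r by (simp add: mul_simps z11_def)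
  moreover have "peirce12 (e - r) z21"
    unfolding peirce12_complement_iff z21_def using zr_r flex r_z11 z11_r
    by (simp add: mul_simps z11_def)
  moreover have "z = z11 + z22 + z12 + z21"
    by (simp add: z12_def z21_def z22_def)
  ultimately show ?thesis by metis
qed

lemma span_peirce_generators:
  assumes r: "isotropic_idempotent r"
  shows "vs.span (peirce_generators r) = UNIV"
proof -
  have "z \<in> vs.span (peirce_generators r)" for z
  proof -
    obtain a b u v where z: "z = a *s r + b *s (e - r) + u + v"
      and "peirce12 r u" and "peirce12 (e - r) v"
      using peirce_decomposition[OF r] by blast
    then have "{r, e - r, u, v} \<subseteq> peirce_generators r"
      by (auto simp: peirce_generators_def)
    then show ?thesis
      unfolding z by (intro vs.span_add vs.span_scale) (auto intro: vs.span_base)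
  qed
  then show ?thesis by auto
qed

lemma mul_peirce_generator:
  assumes r: "isotropic_idempotent r" and "y \<in> peirce_generators r"
  shows "r \<star> y \<in> {0, y}" and "y \<star> r \<in> {0, y}"
  using assms(2) isotropic_idempotentD(1)[OF r] idempotent_mul_complement[of r]
  unfolding peirce_generators_def peirce12_complement_iff by (auto simp: peirce12_def)

lemma peirce12_mul_peirce12:
  assumes r: "isotropic_idempotent r" and u: "peirce12 r u" and w: "peirce12 r w"
  shows "(u \<star> w) \<star> r = u \<star> w" and "(u \<star> w) \<star> w = 0"
  using right_alternative_linearized[of u w r] right_alternative[of u w] peirce12_mul_self[OF r w] u w
  by (simp_all add: peirce12_def)

lemma peirce12_mul_peirce21:
  assumes r: "isotropic_idempotent r" and u: "peirce12 r u" and v: "peirce12 (e - r) v"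
  shows "u \<star> v = tr (u \<star> v) *s r"
proof (rule peirce11_eq[OF r])
  note u' = u[unfolded peirce12_def] and v' = v[unfolded peirce12_complement_iff]
  show "r \<star> (u \<star> v) = u \<star> v"
    using left_alternative_linearized[of r u v] u' v' by simp
  show "(u \<star> v) \<star> r = u \<star> v"
    using right_alternative_linearized[of u v r] u' v' by simp
qed

end

locale finite_dimensional_composition_algebra =
  composition_algebra scl nrm mul e + finite_dimensional_quadratic_space scl nrm Basis
  for scl :: "'a::field \<Rightarrow> 'v::ab_group_add \<Rightarrow> 'v" (infixr "*s" 75)
    and nrm :: "'v \<Rightarrow> 'a" and mul :: "'v \<Rightarrow> 'v \<Rightarrow> 'v" (infixl "\<star>" 70)
    and e :: 'v and Basis :: "'v set"
begin

context
  fixes D :: "'v \<Rightarrow> 'v"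
  assumes two_local: "two_local_aut scl (\<star>) e D"
begin

lemma two_local_polar: "polar nrm (D x) (D y) = polar nrm x y"
proof -
  obtain \<phi> where "\<phi> \<in> algebra_aut scl (\<star>) e" "D x = \<phi> x" "D y = \<phi> y"
    using two_local unfolding two_local_aut_def by blast
  then show ?thesis using algebra_aut_polar by simp
qed

lemma two_local_unit: "D e = e"
  using two_local algebra_autD(3) unfolding two_local_aut_def by metis

lemma two_local_affine_relation:
  assumes "x \<star> y = a *s x + b *s y + c *s e"
  shows "D x \<star> D y = a *s D x + b *s D y + c *s e"
proof -
  obtain \<phi> where aut: "\<phi> \<in> algebra_aut scl (\<star>) e" and "D x = \<phi> x" "D y = \<phi> y"
    using two_local unfolding two_local_aut_def by blast
  moreover interpret \<phi>: module_hom scl scl \<phi> by (rule algebra_autD(1)[OF aut])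
  have "\<phi> (x \<star> y) = \<phi> (a *s x + b *s y + c *s e)" using assms by simp
  ultimately show ?thesis
    by (simp add: algebra_autD(2,3)[OF aut] \<phi>.add \<phi>.scale)
qed

lemma two_local_module_hom: "module_hom scl scl D"
  using polar_preserving_linear[OF two_local_polar] by (simp add: linear_iff_module_hom)

lemma two_local_bij: "bij D"
  by (rule polar_preserving_bij[OF two_local_polar])

interpretation D: module_hom scl scl D by (rule two_local_module_hom)

lemma two_local_mul_trivial:
  assumes "x \<star> y \<in> {0, x, y}"
  shows "D (x \<star> y) = D x \<star> D y"
proof -
  from assms consider (zero) "x \<star> y = 0" | (left) "x \<star> y = x" | (right) "x \<star> y = y"
    by blast
  then show ?thesis
  proof cases
    case zero
    then show ?thesis using two_local_affine_relation[of x y 0 0 0] by simp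
  next
    case left
    then show ?thesis using two_local_affine_relation[of x y 1 0 0] by simp
  next
    case right
    then show ?thesis using two_local_affine_relation[of x y 0 1 0] by simp
  qed
qed

text \<open>The product u w is encoded in the relation (u - u w)(r + w) = 0 between two elements,
  which D respects.\<close>
lemma two_local_mul_peirce12_peirce12:
  assumes r: "isotropic_idempotent r" and u: "peirce12 r u" and w: "peirce12 r w"
  shows "D (u \<star> w) = D u \<star> D w"
proof -
  note uw = peirce12_mul_peirce12[OF r u w]
  have "(u - u \<star> w) \<star> (r + w) = 0"
    using u uw by (simp add: peirce12_def mul_simps)
  then have "D (u - u \<star> w) \<star> D (r + w) = 0"
    using two_local_mul_trivial by fastforce
  moreover have "D u \<star> D r = 0"
    using two_local_mul_trivial[of u r] u by (simp add: peirce12_def)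
  moreover have "D (u \<star> w) \<star> D r = D (u \<star> w)" and "D (u \<star> w) \<star> D w = 0"
    using two_local_mul_trivial[of "u \<star> w" r] two_local_mul_trivial[of "u \<star> w" w] uw by simp_all
  ultimately show ?thesis
    by (simp add: D.diff D.add mul_simps)
qed

lemma two_local_mul_peirce12_peirce21:
  assumes r: "isotropic_idempotent r" and u: "peirce12 r u" and v: "peirce12 (e - r) v"
  shows "D (u \<star> v) = D u \<star> D v"
proof -
  note r_props = isotropic_idempotentD[OF r]
  note u' = u[unfolded peirce12_def] and v' = v[unfolded peirce12_complement_iff]
  define l where "l = tr (u \<star> v)"
  have uv: "u \<star> v = l *s r"
    unfolding l_def by (rule peirce12_mul_peirce21[OF r u v])
  have "(r + u) \<star> (v + l *s (e - r)) = l *s (r + u)"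
    using u' v' r_props uv by (simp add: mul_simps algebra_simps)
  then have "D (r + u) \<star> D (v + l *s (e - r)) = l *s D (r + u)"
    using two_local_affine_relation[of "r + u" "v + l *s (e - r)" l 0 0] by simp
  then have "(D r + D u) \<star> (D v + l *s (e - D r)) = l *s (D r + D u)"
    by (simp add: D.add D.scale D.diff two_local_unit)
  moreover have "D r \<star> D v = 0" "D r \<star> D r = D r" "D u \<star> D r = 0"
    using two_local_mul_trivial[of r v] two_local_mul_trivial[of r r] two_local_mul_trivial[of u r]
      u' v' r_props
    by simp_all
  ultimately have "D u \<star> D v = l *s D r"
    by (simp add: mul_simps algebra_simps)
  then show ?thesis
    by (simp add: uv D.scale)
qed

lemma two_local_mul_peirce_generators:
  assumes r: "isotropic_idempotent r"
    and x: "x \<in> peirce_generators r" and y: "y \<in> peirce_generators r"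
  shows "D (x \<star> y) = D x \<star> D y"
proof -
  have s_iso: "isotropic_idempotent s" and s_gens: "peirce_generators s = peirce_generators r"
    if "s \<in> {r, e - r}" for s
    using that r isotropic_idempotent_complement peirce_generators_complement by auto
  have unit_part: "D (x \<star> y) = D x \<star> D y" if "s \<in> {r, e - r}" and "x = s \<or> y = s" for s
  proof -
    have "x \<star> y \<in> {0, x, y}"
      using that mul_peirce_generator[OF s_iso[OF that(1)]] x y s_gens[OF that(1)] by auto
    then show ?thesis by (rule two_local_mul_trivial)
  qed
  have peirce_part: "D (x \<star> y) = D x \<star> D y" if "s \<in> {r, e - r}" and "peirce12 s x" for s
  proof -
    have "y \<in> {s, e - s} \<or> peirce12 s y \<or> peirce12 (e - s) y"
      using y s_gens[OF that(1)] unfolding peirce_generators_def by auto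
    moreover have "e - s \<in> {r, e - r}"
      using that(1) by auto
    ultimately show ?thesis
      using unit_part[of s] unit_part[of "e - s"] that
        two_local_mul_peirce12_peirce12[OF s_iso] two_local_mul_peirce12_peirce21[OF s_iso]
      by blast
  qed
  show ?thesis
    using x peirce_part unit_part unfolding peirce_generators_def by blast
qed

lemma two_local_aut_in_algebra_aut:
  assumes "z \<noteq> 0" and "nrm z = 0"
  shows "D \<in> algebra_aut scl (\<star>) e"
proof -
  obtain r where r: "isotropic_idempotent r"
    using exists_isotropic_idempotent assms by blast
  have "D (x \<star> y) = D x \<star> D y" for x y
    using mul_hom_if_mul_hom_on_spanning_set[OF two_local_module_hom span_peirce_generators[OF r]]
      two_local_mul_peirce_generators[OF r] by blast
  then show ?thesis
    using two_local_module_hom two_local_bij two_local_unit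
    by (simp add: algebra_aut_def linear_iff_module_hom)
qed

end

end

lemma cayley_algebra_finite_dimensional:
  fixes scl :: "'a::field \<Rightarrow> 'v::ab_group_add \<Rightarrow> 'v"
  assumes "cayley_algebra scl mul e nrm"
  shows "\<exists>Basis. finite_dimensional_composition_algebra scl nrm mul e Basis"
proof -
  interpret vs: vector_space scl
    using assms by (simp add: cayley_algebra_def)
  obtain B where B: "vs.independent B" "UNIV \<subseteq> vs.span B" "card B = 8"
    using vs.basis_exists[of UNIV] assms by (auto simp: cayley_algebra_def)
  have "e \<noteq> 0"
  proof
    assume "e = 0"
    have "mul 0 x = 0" for x
      using assms module_hom.zero[of scl scl "\<lambda>y. mul y x"]
      by (simp add: cayley_algebra_def bilinear_map_def linear_iff_module_hom)
    moreover have "x = mul e x" for x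
      using assms by (simp add: cayley_algebra_def)
    ultimately have "(UNIV :: 'v set) = {0}"
      using \<open>e = 0\<close> by auto
    then have "B \<subseteq> {0}"
      by blast
    then have "card B \<le> 1"
      using card_mono[of "{0}" B] by simp
    with B(3) show False by simp
  qed
  then have "finite_dimensional_composition_algebra scl nrm mul e B"
    using assms B card_ge_0_finite[of B]
    by unfold_locales (auto simp: cayley_algebra_def)
  then show ?thesis ..
qed

theorem theorem4p3:
  fixes scl :: "'a::field \<Rightarrow> 'v::ab_group_add \<Rightarrow> 'v"
    and mul :: "'v \<Rightarrow> 'v \<Rightarrow> 'v" and e :: 'v and nrm :: "'v \<Rightarrow> 'a"
  assumes "split_cayley_algebra scl mul e nrm"
  shows "{\<Delta>. two_local_aut scl mul e \<Delta>} = algebra_aut scl mul e"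
proof -
  obtain Basis where "finite_dimensional_composition_algebra scl nrm mul e Basis"
    using assms cayley_algebra_finite_dimensional unfolding split_cayley_algebra_def by blast
  then interpret finite_dimensional_composition_algebra scl nrm mul e Basis .
  obtain x where "x \<noteq> 0" and "nrm x = 0"
    using assms by (auto simp: split_cayley_algebra_def)
  then show ?thesis
    using two_local_aut_in_algebra_aut by (auto simp: two_local_aut_def)
qed

end
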